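(* Let $(Z,S)$ be an aperiodic zero-dimensional topological dynamical system. For every positive integer $N$ there exist a clopen set $B\subset Z$, a continuous function $h:B\to R_N=\{N+1,\ldots,2N+1\}$ and a homeomorphism $T_B:B\to B$ such that $(Z,S)$ is isomorphic (as a dynamical system, i.e. via an equivariant homeomorphism) to the special topological dynamical system $(Q_N,T')$ induced by $(B,T_B,h)$.
   Context: A t.d.s. is a compact metric space with a homeomorphism; aperiodic means no periodic points; zero-dimensional means clopen sets form a basis. Special t.d.s.: given a zero-dimensional compact metric space $B$, a homeomorphism $T_B:B\to B$ and a continuous $h:B\to\mathbb{Z}_{\ge0}$, let $Q=\{(b,z): b\in B,\ 0\le z<h(b)\}\subset B\times\mathbb{Z}_{\ge0}$ and $T'(b,z)=(b,z+1)$ if $z+1<h(b)$, $T'(b,z)=(T_B(b),0)$ if $z+1=h(b)$. $(Q,T')$ is the special t.d.s. induced by $(B,T_B,h)$. *)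

theory Defs
  imports "HOL-Analysis.Analysis"
begin

definition tds :: "'a::metric_space set \<Rightarrow> ('a \<Rightarrow> 'a) \<Rightarrow> bool" where
  "tds Z S \<longleftrightarrow> compact Z \<and> (\<exists>S'. homeomorphism Z Z S S')"

definition aperiodic :: "'a set \<Rightarrow> ('a \<Rightarrow> 'a) \<Rightarrow> bool" where
  "aperiodic Z S \<longleftrightarrow> (\<forall>x\<in>Z. \<forall>n::nat. n > 0 \<longrightarrow> (S ^^ n) x \<noteq> x)"

definition zero_dimensional :: "'a::topological_space set \<Rightarrow> bool" where
  "zero_dimensional Z \<longleftrightarrow>
     (\<forall>U x. openin (top_of_set Z) U \<and> x \<in> U \<longrightarrow>
        (\<exists>V. openin (top_of_set Z) V \<and> closedin (top_of_set Z) V \<and> x \<in> V \<and> V \<subseteq> U))"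

definition special_space :: "'a set \<Rightarrow> ('a \<Rightarrow> nat) \<Rightarrow> ('a \<times> nat) set" where
  "special_space B h = {(b, z). b \<in> B \<and> z < h b}"

definition special_map :: "('a \<Rightarrow> 'a) \<Rightarrow> ('a \<Rightarrow> nat) \<Rightarrow> 'a \<times> nat \<Rightarrow> 'a \<times> nat" where
  "special_map TB h p = (case p of (b, z) \<Rightarrow>
      if z + 1 < h b then (b, z + 1) else (TB b, 0))"

definition tds_isomorphic ::
  "'a::topological_space set \<Rightarrow> ('a \<Rightarrow> 'a) \<Rightarrow> 'b::topological_space set \<Rightarrow> ('b \<Rightarrow> 'b) \<Rightarrow> bool" where
  "tds_isomorphic X S Y T \<longleftrightarrow>
     (\<exists>\<phi> \<psi>. homeomorphism X Y \<phi> \<psi> \<and> (\<forall>x\<in>X. \<phi> (S x) = T (\<phi> x)))"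

end

theory Submission
  imports Defs
begin

text \<open>
  Every aperiodic zero-dimensional system (Z, S) is a Kakutani-Rokhlin tower over a clopen
  base B whose return times all lie in {N+1, ..., 2N+1}.

  The base is a marker set: a clopen set B that no point revisits within N steps
  (B is N-separated) and whose N-neighbourhood, the set of points at orbit distance at
  most N from B, is all of Z.  Aperiodicity, the Hausdorff property and
  zero-dimensionality give every point an N-separated clopen neighbourhood; compactness
  selects finitely many, and a greedy merge turns them into a single marker set.

  Separation forces the first return time h of B to be at least N+1, covering forces it
  to be at most 2N+1.  The level sets of h are closed, so h and the first return map
  are continuous.  Finally the tower map (b, z) \<mapsto> S^z b is a continuous bijection from the
  special space of (B, first return, h) onto Z intertwining the special map with S; by
  compactness it is the required isomorphism, and the first return map is a
  homeomorphism of B because it is conjugated, inside the tower, to S.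
\<close>

lemma homeomorphism_funpow:
  assumes "homeomorphism Z Z S S'"
  shows "homeomorphism Z Z (S ^^ n) (S' ^^ n)"
proof (induction n)
  case 0
  show ?case by (simp add: homeomorphism_ident id_def)
next
  case (Suc n)
  have "homeomorphism Z Z (S \<circ> S ^^ n) (S' ^^ n \<circ> S')"
    using Suc.IH assms by (rule homeomorphism_compose)
  then show ?case by (metis funpow.simps(2) funpow_Suc_right)
qed

lemma tds_isomorphicI:
  assumes hom: "homeomorphism Q Z \<psi> \<phi>"
    and maps: "\<And>q. q \<in> Q \<Longrightarrow> T q \<in> Q"
    and equiv: "\<And>q. q \<in> Q \<Longrightarrow> \<psi> (T q) = S (\<psi> q)"
  shows "tds_isomorphic Z S Q T"
  unfolding tds_isomorphic_def
proof (intro exI conjI ballI)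
  show "homeomorphism Z Q \<phi> \<psi>" using hom by (rule homeomorphism_symD)
  fix x assume x: "x \<in> Z"
  have q: "\<phi> x \<in> Q" and \<psi>\<phi>: "\<psi> (\<phi> x) = x"
    using hom x by (auto simp: homeomorphism_def)
  have "\<phi> (S x) = \<phi> (\<psi> (T (\<phi> x)))" using equiv[OF q] \<psi>\<phi> by simp
  also have "\<dots> = T (\<phi> x)" using hom maps[OF q] by (simp add: homeomorphism_apply1)
  finally show "\<phi> (S x) = T (\<phi> x)" .
qed

definition clopen_in :: "'a::topological_space set \<Rightarrow> 'a set \<Rightarrow> bool" where
  "clopen_in Z A \<longleftrightarrow> openin (top_of_set Z) A \<and> closedin (top_of_set Z) A"

lemma clopen_in_Un: "clopen_in Z A \<Longrightarrow> clopen_in Z C \<Longrightarrow> clopen_in Z (A \<union> C)"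
  by (simp add: clopen_in_def openin_Un closedin_Un)

lemma clopen_in_Diff: "clopen_in Z A \<Longrightarrow> clopen_in Z C \<Longrightarrow> clopen_in Z (A - C)"
  by (simp add: clopen_in_def openin_diff closedin_diff)

lemma clopen_in_UN:
  "finite I \<Longrightarrow> (\<And>i. i \<in> I \<Longrightarrow> clopen_in Z (A i)) \<Longrightarrow> clopen_in Z (\<Union>i\<in>I. A i)"
  unfolding clopen_in_def by (auto intro: openin_Union closedin_Union)

lemma clopen_in_preimage:
  assumes "continuous_on Z f" "f \<in> Z \<rightarrow> Z" "clopen_in Z A"
  shows "clopen_in Z (Z \<inter> f -` A)"
  using assms unfolding clopen_in_def
  by (simp add: continuous_openin_preimage continuous_closedin_preimage_gen)

lemma clopen_in_subset: "clopen_in Z A \<Longrightarrow> A \<subseteq> Z"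
  unfolding clopen_in_def using openin_imp_subset by blast

lemma nbhd_disjoint_from_image:
  fixes f :: "'a \<Rightarrow> 'a::t2_space"
  assumes "continuous_on Z f" "x \<in> Z" "f x \<noteq> x"
  obtains V where "openin (top_of_set Z) V" "x \<in> V" "\<And>u. u \<in> V \<Longrightarrow> f u \<notin> V"
proof -
  obtain A C where AC: "open A" "open C" "x \<in> A" "f x \<in> C" "A \<inter> C = {}"
    using separation_t2 assms(3) by metis
  let ?V = "(Z \<inter> A) \<inter> (Z \<inter> f -` C)"
  have "openin (top_of_set Z) ?V"
    using AC assms(1) by (intro openin_Int openin_open_Int continuous_openin_preimage_gen)
  moreover have "f u \<notin> ?V" if "u \<in> ?V" for u using that AC by auto
  ultimately show thesis using that AC assms(2) by auto
qed

section \<open>Marker sets of an aperiodic zero-dimensional system\<close>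

locale aperiodic_zd_system =
  fixes Z :: "'a::metric_space set" and S S' :: "'a \<Rightarrow> 'a" and N :: nat
  assumes compact_Z: "compact Z" and homeo: "homeomorphism Z Z S S'"
    and aper: "aperiodic Z S" and zero_dim: "zero_dimensional Z" and N_pos: "N > 0"
begin

lemma closed_Z: "closed Z"
  using compact_Z by (rule compact_imp_closed)

lemma compact_closed_subset:
  assumes "closed A" "A \<subseteq> Z"
  shows "compact A"
  using compact_Int_closed[OF compact_Z assms(1)] assms(2) by (simp add: Int_absorb1)

lemma S_in [simp]: "x \<in> Z \<Longrightarrow> S x \<in> Z"
  and inv_S_in [simp]: "x \<in> Z \<Longrightarrow> S' x \<in> Z"
  and inv_S_cancel [simp]: "x \<in> Z \<Longrightarrow> S' (S x) = x"
  and S_cancel [simp]: "x \<in> Z \<Longrightarrow> S (S' x) = x"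
  using homeo unfolding homeomorphism_def by auto

lemma iterate_homeo: "homeomorphism Z Z (S ^^ n) (S' ^^ n)"
  using homeo by (rule homeomorphism_funpow)

lemma iterate_in [simp]: "x \<in> Z \<Longrightarrow> (S ^^ n) x \<in> Z"
  and inv_iterate_in [simp]: "x \<in> Z \<Longrightarrow> (S' ^^ n) x \<in> Z"
  and inv_iterate_cancel [simp]: "x \<in> Z \<Longrightarrow> (S' ^^ n) ((S ^^ n) x) = x"
  and iterate_cancel [simp]: "x \<in> Z \<Longrightarrow> (S ^^ n) ((S' ^^ n) x) = x"
  and continuous_iterate: "continuous_on Z (S ^^ n)"
  and continuous_inv_iterate: "continuous_on Z (S' ^^ n)"
  using iterate_homeo[of n] unfolding homeomorphism_def by auto

lemma inv_iterate_after_iterate: "x \<in> Z \<Longrightarrow> i \<le> n \<Longrightarrow> (S' ^^ i) ((S ^^ n) x) = (S ^^ (n - i)) x"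
  by (auto simp: funpow_add dest!: le_Suc_ex)

lemma iterate_after_inv_iterate: "x \<in> Z \<Longrightarrow> i \<le> n \<Longrightarrow> (S ^^ i) ((S' ^^ n) x) = (S' ^^ (n - i)) x"
  by (auto simp: funpow_add dest!: le_Suc_ex)

definition separated :: "'a set \<Rightarrow> bool" where
  "separated A \<longleftrightarrow> (\<forall>u\<in>A. \<forall>i\<in>{1..N}. (S ^^ i) u \<notin> A)"

definition orbit_nbhd :: "'a set \<Rightarrow> 'a set" where
  "orbit_nbhd A = {u\<in>Z. \<exists>i\<le>N. (S ^^ i) u \<in> A \<or> (S' ^^ i) u \<in> A}"

lemma orbit_nbhd_mono: "A \<subseteq> C \<Longrightarrow> orbit_nbhd A \<subseteq> orbit_nbhd C"
  unfolding orbit_nbhd_def by blast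

lemma subset_orbit_nbhd: "A \<subseteq> Z \<Longrightarrow> A \<subseteq> orbit_nbhd A"
  unfolding orbit_nbhd_def by (auto intro!: exI[of _ 0])

lemma clopen_orbit_nbhd:
  assumes "clopen_in Z A"
  shows "clopen_in Z (orbit_nbhd A)"
proof -
  have "orbit_nbhd A = (\<Union>i\<in>{..N}. (Z \<inter> (S ^^ i) -` A) \<union> (Z \<inter> (S' ^^ i) -` A))"
    unfolding orbit_nbhd_def by auto
  moreover have "clopen_in Z (\<Union>i\<in>{..N}. (Z \<inter> (S ^^ i) -` A) \<union> (Z \<inter> (S' ^^ i) -` A))"
    using assms
    by (intro clopen_in_UN clopen_in_Un clopen_in_preimage continuous_iterate
        continuous_inv_iterate) auto
  ultimately show ?thesis by simp
qed

text \<open>Adding to a separated set A the part of a separated set U that is far from A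
  keeps it separated: the two pieces cannot reach each other within N steps.\<close>
lemma separated_extend:
  assumes "separated A" "separated U" "A \<subseteq> Z" "U \<subseteq> Z"
  shows "separated (A \<union> (U - orbit_nbhd A))"
  unfolding separated_def
proof (intro ballI notI)
  fix u i assume u: "u \<in> A \<union> (U - orbit_nbhd A)" and i: "i \<in> {1..N}"
    and v: "(S ^^ i) u \<in> A \<union> (U - orbit_nbhd A)"
  have uZ: "u \<in> Z" using u assms(3,4) by auto
  have "(S ^^ i) u \<in> orbit_nbhd A" if "u \<in> A"
    using that uZ i unfolding orbit_nbhd_def by (auto intro!: exI[of _ i])
  moreover have "u \<in> orbit_nbhd A" if "(S ^^ i) u \<in> A"
    using that uZ i unfolding orbit_nbhd_def by auto
  ultimately show False
    using u v i assms(1,2) unfolding separated_def by blast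
qed

definition greedy_union :: "'a set list \<Rightarrow> 'a set" where
  "greedy_union Us = foldr (\<lambda>U A. A \<union> (U - orbit_nbhd A)) Us {}"

lemma greedy_union:
  assumes "\<forall>U\<in>set Us. clopen_in Z U \<and> separated U"
  shows "clopen_in Z (greedy_union Us) \<and> separated (greedy_union Us) \<and>
    (\<forall>U\<in>set Us. U \<subseteq> orbit_nbhd (greedy_union Us))"
  using assms
proof (induction Us)
  case Nil
  show ?case by (simp add: greedy_union_def clopen_in_def separated_def)
next
  case (Cons U Us)
  let ?A = "greedy_union Us" and ?A' = "greedy_union (U # Us)"
  have IH: "clopen_in Z ?A" "separated ?A" "\<forall>V\<in>set Us. V \<subseteq> orbit_nbhd ?A"
    and U: "clopen_in Z U" "separated U"
    using Cons by auto
  have A': "?A' = ?A \<union> (U - orbit_nbhd ?A)" by (simp add: greedy_union_def)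
  have clopen: "clopen_in Z ?A'"
    unfolding A' by (intro clopen_in_Un clopen_in_Diff clopen_orbit_nbhd IH U)
  have "separated ?A'"
    unfolding A' using IH U by (intro separated_extend) (auto dest: clopen_in_subset)
  moreover have "V \<subseteq> orbit_nbhd ?A'" if "V \<in> set (U # Us)" for V
  proof -
    have grow: "orbit_nbhd ?A \<subseteq> orbit_nbhd ?A'" unfolding A' by (rule orbit_nbhd_mono) blast
    have "?A' \<subseteq> orbit_nbhd ?A'" using clopen by (intro subset_orbit_nbhd clopen_in_subset)
    then have "U \<subseteq> orbit_nbhd ?A'" using grow unfolding A' by blast
    then show ?thesis using that IH(3) grow by auto
  qed
  ultimately show ?case using clopen by blast
qed

text \<open>Every point has an N-separated clopen neighbourhood: by aperiodicity each of
  S, ..., S^N moves a neighbourhood of the point off itself, and zero-dimensionality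
  gives a clopen set inside the intersection of these neighbourhoods.\<close>
lemma separated_clopen_nbhd:
  assumes x: "x \<in> Z"
  obtains W where "clopen_in Z W" "separated W" "x \<in> W"
proof -
  have "\<forall>i\<in>{1..N}. \<exists>V. openin (top_of_set Z) V \<and> x \<in> V \<and> (\<forall>u\<in>V. (S ^^ i) u \<notin> V)"
  proof
    fix i assume "i \<in> {1..N}"
    then have "(S ^^ i) x \<noteq> x" using aper x unfolding aperiodic_def by auto
    then obtain V where "openin (top_of_set Z) V" "x \<in> V" "\<And>u. u \<in> V \<Longrightarrow> (S ^^ i) u \<notin> V"
      using nbhd_disjoint_from_image[OF continuous_iterate x] by blast
    then show "\<exists>V. openin (top_of_set Z) V \<and> x \<in> V \<and> (\<forall>u\<in>V. (S ^^ i) u \<notin> V)" by blast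
  qed
  then obtain V where V: "\<forall>i\<in>{1..N}.
      openin (top_of_set Z) (V i) \<and> x \<in> V i \<and> (\<forall>u\<in>V i. (S ^^ i) u \<notin> V i)"
    by (rule bchoice[THEN exE])
  have "openin (top_of_set Z) (\<Inter>i\<in>{1..N}. V i)"
    using V N_pos by (intro openin_INT2) auto
  moreover have "x \<in> (\<Inter>i\<in>{1..N}. V i)" using V by blast
  ultimately obtain W where W: "openin (top_of_set Z) W" "closedin (top_of_set Z) W"
      "x \<in> W" "W \<subseteq> (\<Inter>i\<in>{1..N}. V i)"
    using zero_dim[unfolded zero_dimensional_def, rule_format, of "\<Inter>i\<in>{1..N}. V i" x] by blast
  have "separated W"
    unfolding separated_def
  proof (intro ballI notI)
    fix u i assume "u \<in> W" "i \<in> {1..N}" "(S ^^ i) u \<in> W"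
    then have "u \<in> V i" "(S ^^ i) u \<in> V i" using W(4) by auto
    then show False using V \<open>i \<in> {1..N}\<close> by blast
  qed
  then show thesis using that W by (simp add: clopen_in_def)
qed

text \<open>A marker set exists: finitely many separated clopen sets cover Z by compactness,
  and their greedy merge is a separated clopen set whose N-neighbourhood is Z.\<close>
lemma marker_set_exists: "\<exists>B. clopen_in Z B \<and> separated B \<and> Z \<subseteq> orbit_nbhd B"
proof -
  let ?C = "{W. clopen_in Z W \<and> separated W}"
  have "Z \<subseteq> \<Union>?C" using separated_clopen_nbhd by blast
  moreover have "\<forall>W\<in>?C. openin (top_of_set Z) W" by (simp add: clopen_in_def)
  ultimately obtain D where D: "D \<subseteq> ?C" "finite D" "Z \<subseteq> \<Union>D"
    using compact_Z[unfolded compact_eq_openin_cover, rule_format, of ?C] by blast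
  obtain Us where Us: "set Us = D" using D(2) finite_list by blast
  have "\<forall>U\<in>set Us. clopen_in Z U \<and> separated U" using D(1) Us by blast
  then have merged: "clopen_in Z (greedy_union Us)" "separated (greedy_union Us)"
      "\<forall>U\<in>D. U \<subseteq> orbit_nbhd (greedy_union Us)"
    using Us greedy_union by auto
  have "Z \<subseteq> orbit_nbhd (greedy_union Us)" using D(3) merged(3) by blast
  then show ?thesis using merged(1,2) by blast
qed

end

section \<open>The tower over a marker set\<close>

locale marker_set = aperiodic_zd_system +
  fixes B :: "'a set"
  assumes clopen_B: "clopen_in Z B" and separated_B: "separated B"
    and covers: "Z \<subseteq> orbit_nbhd B"
begin

lemma B_subset: "B \<subseteq> Z"
  using clopen_B by (rule clopen_in_subset)

lemma closed_B: "closed B"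
  using clopen_B closed_Z closedin_closed_trans unfolding clopen_in_def by blast

lemma closed_complement_B: "closed (Z - B)"
proof -
  have "closedin (top_of_set Z) (Z - B)"
    using clopen_B by (simp add: clopen_in_def openin_closedin_eq)
  then show ?thesis using closed_Z closedin_closed_trans by blast
qed

lemma hits_B_forward:
  assumes x: "x \<in> Z"
  shows "\<exists>i\<le>2*N. (S ^^ i) x \<in> B"
proof -
  have "(S ^^ N) x \<in> orbit_nbhd B" using covers x by auto
  then obtain i where i: "i \<le> N" "(S ^^ i) ((S ^^ N) x) \<in> B \<or> (S' ^^ i) ((S ^^ N) x) \<in> B"
    unfolding orbit_nbhd_def by blast
  then have "(S ^^ (i + N)) x \<in> B \<or> (S ^^ (N - i)) x \<in> B"
    using x by (simp add: funpow_add inv_iterate_after_iterate)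
  moreover have "i + N \<le> 2*N" "N - i \<le> 2*N" using i(1) by auto
  ultimately show ?thesis by blast
qed

lemma hits_B_backward:
  assumes x: "x \<in> Z"
  shows "\<exists>i. (S' ^^ i) x \<in> B"
proof -
  obtain i where "i \<le> 2*N" "(S ^^ i) ((S' ^^ (2*N)) x) \<in> B"
    using hits_B_forward[of "(S' ^^ (2*N)) x"] x by auto
  then have "(S' ^^ (2*N - i)) x \<in> B" using x by (simp add: iterate_after_inv_iterate)
  then show ?thesis by blast
qed

definition return_time :: "'a \<Rightarrow> nat" where
  "return_time b = (LEAST m. 0 < m \<and> (S ^^ m) b \<in> B)"

definition first_return :: "'a \<Rightarrow> 'a" where
  "first_return b = (S ^^ return_time b) b"

lemma returns_within:
  assumes b: "b \<in> B"
  shows "\<exists>m. 0 < m \<and> m \<le> 2*N+1 \<and> (S ^^ m) b \<in> B"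
proof -
  have "S b \<in> Z" using b B_subset by auto
  then obtain i where "i \<le> 2*N" "(S ^^ i) (S b) \<in> B"
    using hits_B_forward by blast
  then show ?thesis by (intro exI[of _ "Suc i"]) (auto simp: funpow_swap1)
qed

text \<open>The return time is a genuine first return time; separation of B bounds it below
  by N + 1 and the covering property bounds it above by 2N + 1.\<close>
lemma return_time:
  assumes b: "b \<in> B"
  shows return_time_pos: "0 < return_time b"
    and first_return_in: "first_return b \<in> B"
    and no_earlier_return: "\<And>m. 0 < m \<Longrightarrow> m < return_time b \<Longrightarrow> (S ^^ m) b \<notin> B"
    and return_time_range: "return_time b \<in> {N+1..2*N+1}"
proof -
  obtain m where m: "0 < m" "m \<le> 2*N+1" "(S ^^ m) b \<in> B" using returns_within b by blast
  have least: "0 < return_time b \<and> (S ^^ return_time b) b \<in> B"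
    unfolding return_time_def by (rule LeastI[of _ m]) (use m in simp)
  then show "0 < return_time b" "first_return b \<in> B" by (auto simp: first_return_def)
  show "\<And>m. 0 < m \<Longrightarrow> m < return_time b \<Longrightarrow> (S ^^ m) b \<notin> B"
    unfolding return_time_def using not_less_Least by blast
  have "return_time b \<le> m" unfolding return_time_def using m by (intro Least_le) simp
  moreover have "N + 1 \<le> return_time b"
  proof (rule ccontr)
    assume "\<not> N + 1 \<le> return_time b"
    then have "return_time b \<in> {1..N}" using least by auto
    then show False using separated_B b least unfolding separated_def by blast
  qed
  ultimately show "return_time b \<in> {N+1..2*N+1}" using m(2) by simp
qed

text \<open>The level sets of the return time are closed and finitely many, so functions
  continuous on each level are continuous on B.\<close>
definition level :: "nat \<Rightarrow> 'a set" where
  "level n = {b\<in>B. (S ^^ n) b \<in> B \<and> (\<forall>m\<in>{1..<n}. (S ^^ m) b \<notin> B)}"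

lemma level_eq:
  assumes n: "0 < n"
  shows "level n = {b\<in>B. return_time b = n}"
proof (intro set_eqI iffI)
  fix b assume b: "b \<in> level n"
  have "return_time b = n"
    unfolding return_time_def
  proof (rule Least_equality)
    show "0 < n \<and> (S ^^ n) b \<in> B" using n b by (simp add: level_def)
    show "n \<le> m" if "0 < m \<and> (S ^^ m) b \<in> B" for m
      using that b by (force simp: level_def)
  qed
  then show "b \<in> {b\<in>B. return_time b = n}" using b by (simp add: level_def)
next
  fix b assume "b \<in> {b\<in>B. return_time b = n}"
  then have b: "b \<in> B" "return_time b = n" by auto
  show "b \<in> level n"
    using first_return_in[OF b(1)] no_earlier_return[OF b(1)] b
    unfolding level_def first_return_def by auto
qed

lemma closed_level: "closed (level n)"
proof -
  have "level n = B \<inter> (Z \<inter> (S ^^ n) -` B) \<inter> (\<Inter>m\<in>{1..<n}. Z \<inter> (S ^^ m) -` (Z - B))"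
    unfolding level_def using B_subset by auto
  moreover have "closed (B \<inter> (Z \<inter> (S ^^ n) -` B) \<inter> (\<Inter>m\<in>{1..<n}. Z \<inter> (S ^^ m) -` (Z - B)))"
    using closed_B closed_complement_B closed_Z continuous_iterate
    by (intro closed_Int closed_INT ballI continuous_closed_preimage) auto
  ultimately show ?thesis by simp
qed

lemma B_levels: "B = (\<Union>n\<in>{N+1..2*N+1}. level n)"
  using return_time_range by (auto simp: level_eq)

lemma continuous_on_B_by_levels:
  "(\<And>n. n \<in> {N+1..2*N+1} \<Longrightarrow> continuous_on (level n) f) \<Longrightarrow> continuous_on B f"
  by (subst B_levels) (intro continuous_on_closed_Union closed_level, auto)

lemma continuous_return_time: "continuous_on B return_time"
proof (rule continuous_on_B_by_levels)
  fix n assume "n \<in> {N+1..2*N+1}"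
  then have "\<And>b. b \<in> level n \<Longrightarrow> n = return_time b" by (simp add: level_eq)
  then show "continuous_on (level n) return_time"
    using continuous_on_const continuous_on_eq by blast
qed

lemma continuous_first_return: "continuous_on B first_return"
proof (rule continuous_on_B_by_levels)
  fix n assume "n \<in> {N+1..2*N+1}"
  then have "\<And>b. b \<in> level n \<Longrightarrow> (S ^^ n) b = first_return b"
    by (simp add: level_eq first_return_def)
  moreover have "continuous_on (level n) (S ^^ n)"
    using continuous_iterate by (rule continuous_on_subset) (use B_subset in \<open>auto simp: level_def\<close>)
  ultimately show "continuous_on (level n) first_return"
    using continuous_on_eq by blast
qed

abbreviation tower :: "('a \<times> nat) set" where
  "tower \<equiv> special_space B return_time"

abbreviation tower_shift :: "'a \<times> nat \<Rightarrow> 'a \<times> nat" where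
  "tower_shift \<equiv> special_map first_return return_time"

definition tower_map :: "'a \<times> nat \<Rightarrow> 'a" where
  "tower_map p = (S ^^ snd p) (fst p)"

lemma tower_levels: "tower = (\<Union>n\<in>{N+1..2*N+1}. level n \<times> {..<n})"
  using return_time_range by (auto simp: special_space_def level_eq)

lemma compact_tower: "compact tower"
proof -
  have "compact (level n)" for n
    using closed_level B_subset by (intro compact_closed_subset) (auto simp: level_def)
  then show ?thesis
    unfolding tower_levels by (intro compact_UN compact_Times) (simp_all add: finite_imp_compact)
qed

text \<open>On each floor B \<times> {z} the tower map is S^z, and the floors are closed and finitely
  many.\<close>
lemma continuous_tower_map: "continuous_on tower tower_map"
proof -
  have "continuous_on (\<Union>z\<in>{..2*N}. B \<times> {z}) tower_map"
  proof (intro continuous_on_closed_Union)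
    fix z assume "z \<in> {..2*N}"
    have "continuous_on (B \<times> {z}) (\<lambda>p. (S ^^ z) (fst p))"
      by (rule continuous_on_compose2[OF continuous_iterate continuous_on_fst[OF continuous_on_id]])
        (use B_subset in auto)
    then show "continuous_on (B \<times> {z}) tower_map"
      by (rule continuous_on_eq) (auto simp: tower_map_def)
  qed (auto intro: closed_Times closed_B)
  moreover have "tower \<subseteq> (\<Union>z\<in>{..2*N}. B \<times> {z})"
    unfolding special_space_def using return_time_range by fastforce
  ultimately show ?thesis by (rule continuous_on_subset)
qed

text \<open>Every point is S^k b, where b is its last visit to B and k < return_time b.\<close>
lemma tower_map_surj: "tower_map ` tower = Z"
proof
  show "tower_map ` tower \<subseteq> Z"
    using B_subset by (auto simp: special_space_def tower_map_def)
  show "Z \<subseteq> tower_map ` tower"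
  proof
    fix x assume x: "x \<in> Z"
    define k where "k = (LEAST k. (S' ^^ k) x \<in> B)"
    define b where "b = (S' ^^ k) x"
    have b: "b \<in> B" unfolding b_def k_def by (rule LeastI_ex[OF hits_B_backward[OF x]])
    have last_visit: "(S' ^^ j) x \<notin> B" if "j < k" for j
      using that unfolding k_def by (rule not_less_Least)
    have "k < return_time b"
    proof (rule ccontr)
      assume "\<not> k < return_time b"
      then have "first_return b = (S' ^^ (k - return_time b)) x"
        using x unfolding b_def first_return_def by (simp add: iterate_after_inv_iterate)
      moreover have "k - return_time b < k"
        using return_time_pos[OF b] \<open>\<not> k < return_time b\<close> by linarith
      ultimately show False using first_return_in[OF b] last_visit by auto
    qed
    then have "(b, k) \<in> tower" using b by (simp add: special_space_def)
    moreover have "tower_map (b, k) = x" using x by (simp add: tower_map_def b_def)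
    ultimately show "x \<in> tower_map ` tower" by force
  qed
qed

text \<open>Two floors S^z b and S^z' b' with z \<le> z' coincide only if z = z' and b = b',
  since otherwise b would be a return of b' to B before return_time b'.\<close>
lemma tower_map_eq:
  assumes "b \<in> B" "z < return_time b" "b' \<in> B" "z' < return_time b'"
    and eq: "(S ^^ z) b = (S ^^ z') b'" and le: "z \<le> z'"
  shows "b = b' \<and> z = z'"
proof -
  have "b = (S' ^^ z) ((S ^^ z) b)" using assms(1) B_subset by auto
  also have "\<dots> = (S' ^^ z) ((S ^^ z') b')" by (simp add: eq)
  also have "\<dots> = (S ^^ (z' - z)) b'"
    using assms(3) B_subset le by (simp add: subsetD inv_iterate_after_iterate)
  finally have b: "b = (S ^^ (z' - z)) b'" .
  have "z' - z = 0"
  proof (rule ccontr)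
    assume "z' - z \<noteq> 0"
    then have "(S ^^ (z' - z)) b' \<notin> B" using no_earlier_return[OF assms(3)] assms(4) by auto
    then show False using b assms(1) by simp
  qed
  then show ?thesis using b le by simp
qed

lemma tower_map_inj: "inj_on tower_map tower"
proof (rule inj_onI)
  fix p q assume "p \<in> tower" "q \<in> tower" "tower_map p = tower_map q"
  then obtain b z b' z' where p: "p = (b, z)" "b \<in> B" "z < return_time b"
    and q: "q = (b', z')" "b' \<in> B" "z' < return_time b'"
    and eq: "(S ^^ z) b = (S ^^ z') b'"
    by (auto simp: special_space_def tower_map_def)
  show "p = q"
    using tower_map_eq[OF p(2,3) q(2,3) eq] tower_map_eq[OF q(2,3) p(2,3) eq[symmetric]] p q
    by (cases "z \<le> z'") auto
qed

lemma tower_homeomorphism: "\<exists>\<phi>. homeomorphism tower Z tower_map \<phi>"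
  using compact_tower continuous_tower_map tower_map_surj tower_map_inj
  by (rule homeomorphism_compact)

lemma tower_shift_in: "q \<in> tower \<Longrightarrow> tower_shift q \<in> tower"
  using first_return_in return_time_pos
  by (auto simp: special_space_def special_map_def split: if_splits)

lemma tower_map_shift:
  assumes "q \<in> tower"
  shows "tower_map (tower_shift q) = S (tower_map q)"
proof -
  obtain b z where q: "q = (b, z)" "z < return_time b"
    using assms by (auto simp: special_space_def)
  show ?thesis
  proof (cases "z + 1 < return_time b")
    case True
    then show ?thesis using q by (simp add: special_map_def tower_map_def)
  next
    case False
    then have "return_time b = Suc z" using q by simp
    then have "first_return b = S ((S ^^ z) b)" by (simp add: first_return_def)
    then show ?thesis using q False by (simp add: special_map_def tower_map_def)
  qed
qed

text \<open>The first return map is a bijection of B: in the tower, (first_return b, 0) is the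
  unique successor of the top floor (b, return_time b - 1), and S is a bijection.\<close>
lemma top_floor: "b \<in> B \<Longrightarrow> (b, return_time b - 1) \<in> tower \<and>
    tower_shift (b, return_time b - 1) = (first_return b, 0)"
  using return_time_pos by (simp add: special_space_def special_map_def)

lemma first_return_inj: "inj_on first_return B"
proof (rule inj_onI)
  fix b b' assume b: "b \<in> B" and b': "b' \<in> B" and eq: "first_return b = first_return b'"
  let ?p = "(b, return_time b - 1)" and ?p' = "(b', return_time b' - 1)"
  have p: "?p \<in> tower" "?p' \<in> tower" using top_floor b b' by auto
  have "S (tower_map ?p) = S (tower_map ?p')"
    using tower_map_shift[OF p(1)] tower_map_shift[OF p(2)] top_floor[OF b] top_floor[OF b'] eq
    by simp
  then have "S' (S (tower_map ?p)) = S' (S (tower_map ?p'))" by simp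
  moreover have "tower_map ?p \<in> Z" "tower_map ?p' \<in> Z" using p tower_map_surj by auto
  ultimately have "tower_map ?p = tower_map ?p'" by simp
  then show "b = b'" using inj_onD[OF tower_map_inj _ p] by simp
qed

text \<open>Each c \<in> B is a first return: the point of the tower below (c, 0) is a top floor.\<close>
lemma first_return_surj: "first_return ` B = B"
proof
  show "first_return ` B \<subseteq> B" using first_return_in by auto
  show "B \<subseteq> first_return ` B"
  proof
    fix c assume c: "c \<in> B"
    then have cZ: "c \<in> Z" using B_subset by auto
    then have "S' c \<in> tower_map ` tower" using tower_map_surj by simp
    then obtain q where q: "S' c = tower_map q" "q \<in> tower" by (rule imageE)
    have "tower_map (tower_shift q) = tower_map (c, 0)"
      using tower_map_shift[OF q(2)] q(1)[symmetric] cZ by (simp add: tower_map_def)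
    moreover have "(c, 0) \<in> tower" using c return_time_pos by (simp add: special_space_def)
    ultimately have "tower_shift q = (c, 0)"
      using inj_onD[OF tower_map_inj] tower_shift_in[OF q(2)] by blast
    then show "c \<in> first_return ` B"
      using q(2) by (auto simp: special_space_def special_map_def split: if_splits)
  qed
qed

lemma first_return_homeomorphism: "\<exists>T'. homeomorphism B B first_return T'"
proof (rule homeomorphism_compact)
  show "compact B" using closed_B B_subset by (rule compact_closed_subset)
qed (use continuous_first_return first_return_surj first_return_inj in auto)

lemma tower_isomorphic: "tds_isomorphic Z S tower tower_shift"
proof -
  obtain \<phi> where "homeomorphism tower Z tower_map \<phi>" using tower_homeomorphism by blast
  then show ?thesis using tower_shift_in tower_map_shift by (rule tds_isomorphicI)
qed

end

theorem mainTheorem6: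
  fixes Z :: "'a::metric_space set" and S :: "'a \<Rightarrow> 'a" and N :: nat
  assumes "tds Z S" and "aperiodic Z S" and "zero_dimensional Z" and "N > 0"
  shows "\<exists>B (h :: 'a \<Rightarrow> nat) TB.
           B \<subseteq> Z \<and> openin (top_of_set Z) B \<and> closedin (top_of_set Z) B \<and>
           continuous_on B h \<and> h ` B \<subseteq> {N+1..2*N+1} \<and>
           (\<exists>TB'. homeomorphism B B TB TB') \<and>
           tds_isomorphic Z S (special_space B h) (special_map TB h)"
proof -
  obtain S' where "compact Z" "homeomorphism Z Z S S'"
    using assms(1) unfolding tds_def by blast
  then interpret aperiodic_zd_system Z S S' N
    using assms by unfold_locales
  obtain B where "clopen_in Z B" "separated B" "Z \<subseteq> orbit_nbhd B"
    using marker_set_exists by blast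
  then interpret marker_set Z S S' N B
    by unfold_locales
  show ?thesis
    using B_subset clopen_B continuous_return_time return_time_range
      first_return_homeomorphism tower_isomorphic
    unfolding clopen_in_def by blast
qed

end
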